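(* Let $\mathcal Q_1,\dots,\mathcal Q_l\subseteq V$ be linear subspaces such that the linear spaces $\mathcal L_1,\dots,\mathcal L_l\subseteq\mathbb P(V^* )$ defined by $(\mathcal Q_1),\dots,(\mathcal Q_l)$ form a linearly joined sequence. Let $V'=\mathcal F_1\oplus\dots\oplus\mathcal F_l$ be a $K$-vector space, set $\tilde{\mathcal Q}_i=\mathcal Q_i\oplus\bigoplus_{j\neq i}\mathcal F_j\subseteq V\oplus V'$, and let $\tilde{\mathcal L}_i\subseteq\mathbb P((V\oplus V')^* )$ be the linear space defined by the ideal $(\tilde{\mathcal Q}_i)$ of $K[V\oplus V']$; identify $\mathcal L_i$ with the linear space defined by $(\mathcal Q_i)+(V')$ in $\mathbb P((V\oplus V')^* )$. Then: (1) the sequence $\tilde{\mathcal L}_1,\dots,\tilde{\mathcal L}_l$ is linearly joined, and for every $i=2,\dots,l$, $\tilde{\mathcal L}_i\cap(\tilde{\mathcal L}_1\cup\dots\cup\tilde{\mathcal L}_{i-1})=\mathcal L_i\cap(\mathcal L_1\cup\dots\cup\mathcal L_{i-1})$; (2) in $K[V\oplus V']$, $$\bigcap_{i=1}^l(\tilde{\mathcal Q}_i)=\Big(\bigcap_{i=1}^l(\mathcal Q_i)\Big)+\sum_{i=1}^l(\tilde{\mathcal Q}_i\times\mathcal F_i),$$ where $(\tilde{\mathcal Q}_i\times\mathcal F_i)$ is the ideal generated by all products $fg$ with $f\in\tilde{\mathcal Q}_i$, $g\in\mathcal F_i$.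
   Context: $K$ is a field, $V$ a finite-dimensional $K$-vector space, $S=K[V]$. For $Q$ a subset of a vector space $W$, $(Q)$ is the ideal of $K[W]$ generated by $Q$. A sequence $\mathcal L_1,\dots,\mathcal L_l$ of linear subspaces of a projective space is linearly joined if for every $i=1,\dots,l-1$, $\mathcal L_{i+1}\cap(\mathcal L_1\cup\dots\cup\mathcal L_i)=\mathcal L_{i+1}\cap\mathrm{span}(\mathcal L_1\cup\dots\cup\mathcal L_i)$, where $\mathrm{span}$ is the smallest linear subspace containing the set. *)

theory Defs
  imports "HOL-Library.Poly_Mapping"
begin

text \<open>Vectors of a finite-dimensional K-vector space W are coordinate functions
  'v \<Rightarrow> 'k (w.r.t. a basis indexed by the finite type 'v).  The same
  representation is used for points of the dual space W^*.\<close>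

definition lsubspace :: "('v \<Rightarrow> 'k::field) set \<Rightarrow> bool" where
  "lsubspace S \<longleftrightarrow> (\<lambda>_. 0) \<in> S \<and> (\<forall>x\<in>S. \<forall>y\<in>S. (\<lambda>v. x v + y v) \<in> S)
     \<and> (\<forall>c. \<forall>x\<in>S. (\<lambda>v. c * x v) \<in> S)"

definition lspan :: "('v \<Rightarrow> 'k::field) set \<Rightarrow> ('v \<Rightarrow> 'k) set" where
  "lspan A = \<Inter>{S. lsubspace S \<and> A \<subseteq> S}"

definition is_ideal :: "'r::comm_ring_1 set \<Rightarrow> bool" where
  "is_ideal I \<longleftrightarrow> 0 \<in> I \<and> (\<forall>x\<in>I. \<forall>y\<in>I. x + y \<in> I) \<and> (\<forall>r. \<forall>x\<in>I. r * x \<in> I)"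

definition ideal_gen :: "'r::comm_ring_1 set \<Rightarrow> 'r set" where
  "ideal_gen G = \<Inter>{I. is_ideal I \<and> G \<subseteq> I}"

text \<open>The polynomial ring K[W] = symmetric algebra on W, i.e. polynomials in the
  basis variables 'v; a vector of W is a linear form.\<close>

type_synonym ('v, 'k) mpoly = "('v \<Rightarrow>\<^sub>0 nat) \<Rightarrow>\<^sub>0 'k"

definition lpoly :: "('v::finite \<Rightarrow> 'k::field) \<Rightarrow> ('v, 'k) mpoly" where
  "lpoly c = (\<Sum>v\<in>UNIV. Poly_Mapping.single (Poly_Mapping.single v 1) (c v))"

definition peval :: "('v \<Rightarrow> 'k::field) \<Rightarrow> ('v, 'k) mpoly \<Rightarrow> 'k" where
  "peval p f = sum (\<lambda>m. Poly_Mapping.lookup f m * prod (\<lambda>v. p v ^ Poly_Mapping.lookup m v) (Poly_Mapping.keys m)) (Poly_Mapping.keys f)"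

text \<open>Affine cone in W^* of the projective linear space defined by an ideal.\<close>

definition zero_locus :: "('v, 'k::field) mpoly set \<Rightarrow> ('v \<Rightarrow> 'k) set" where
  "zero_locus I = {p. \<forall>f\<in>I. peval p f = 0}"

definition lin_space :: "('v::finite \<Rightarrow> 'k::field) set \<Rightarrow> ('v \<Rightarrow> 'k) set" where
  "lin_space Q = zero_locus (ideal_gen (lpoly ` Q))"

definition linearly_joined :: "(nat \<Rightarrow> ('v \<Rightarrow> 'k::field) set) \<Rightarrow> nat \<Rightarrow> bool" where
  "linearly_joined L l \<longleftrightarrow> (\<forall>i\<in>{1..<l}.
     L (Suc i) \<inter> (\<Union>j\<in>{1..i}. L j) = L (Suc i) \<inter> lspan (\<Union>j\<in>{1..i}. L j))"

definition extl :: "('a \<Rightarrow> 'k::zero) \<Rightarrow> ('a + 'b \<Rightarrow> 'k)" where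
  "extl c = case_sum c (\<lambda>_. 0)"

definition extr :: "('b \<Rightarrow> 'k::zero) \<Rightarrow> ('a + 'b \<Rightarrow> 'k)" where
  "extr d = case_sum (\<lambda>_. 0) d"

definition direct_sum_decomp :: "(nat \<Rightarrow> ('b \<Rightarrow> 'k::field) set) \<Rightarrow> nat \<Rightarrow> bool" where
  "direct_sum_decomp F l \<longleftrightarrow>
     (\<forall>j\<in>{1..l}. lsubspace (F j)) \<and>
     (\<forall>v. \<exists>f. (\<forall>j\<in>{1..l}. f j \<in> F j) \<and> v = (\<lambda>x. \<Sum>j\<in>{1..l}. f j x)) \<and>
     (\<forall>f. (\<forall>j\<in>{1..l}. f j \<in> F j) \<and> (\<lambda>x. \<Sum>j\<in>{1..l}. f j x) = (\<lambda>_. 0)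
          \<longrightarrow> (\<forall>j\<in>{1..l}. f j = (\<lambda>_. 0)))"

definition tildeQ :: "(nat \<Rightarrow> ('a \<Rightarrow> 'k::field) set) \<Rightarrow> (nat \<Rightarrow> ('b \<Rightarrow> 'k) set) \<Rightarrow> nat
    \<Rightarrow> nat \<Rightarrow> ('a + 'b \<Rightarrow> 'k) set" where
  "tildeQ Q F l i = lspan (extl ` Q i \<union> (\<Union>j\<in>{1..l} - {i}. extr ` F j))"

end

(* A point p of $\mathbb P((V \oplus V')^\ast)$ lies on $\tilde L_i$ iff its V-part lies on $L_i$
   and its V'-part annihilates every $F_j$ with $j \neq i$.  Since $V' = F_1 \oplus \dots \oplus F_l$,
   a point on two different $\tilde L_i$, or on $\tilde L_{i+1}$ and in the span of
   $\tilde L_1, \dots, \tilde L_i$, has V'-part zero; this gives (1).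

   For (2), let $\tau_k$ be the projection of $V \oplus V'$ with kernel $F_1 \oplus \dots \oplus F_k$,
   acting on $K[V \oplus V']$ by substitution (kill_summands k and linear_subst below).  The maps
   $\tau_{k-1}$ and $\tau_k$ agree on $\tilde Q_k$, preserve it, and differ by a map into $F_k$; hence
   for f in $(\tilde Q_k)$ the difference $\tau_{k-1} f - \tau_k f$ lies in $(\tilde Q_k \times F_k)$.
   For f in every $(\tilde Q_i)$ the telescoping sum shows that $f - \tau_l f$ lies in the right-hand
   side, and $\tau_l f$ lies in every $(Q_i)$ because $\tau_l$ maps $\tilde Q_i$ into $Q_i$. *)

theory Submission
  imports Defs "HOL.Modules" "HOL-Library.Function_Algebras"
begin

interpretation ideal: module "(*) :: 'r::comm_ring_1 \<Rightarrow> 'r \<Rightarrow> 'r"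
  by unfold_locales (simp_all add: algebra_simps)

declare ideal.scale_scale [simp del] \<comment> \<open>reversed associativity; loops against \<open>mult.assoc\<close>\<close>

lemma ideal_gen_eq_span: "ideal_gen = ideal.span"
  by (auto simp: fun_eq_iff ideal_gen_def ideal.span_def hull_def is_ideal_def ideal.subspace_def)

abbreviation product_set :: "'a::times set \<Rightarrow> 'a set \<Rightarrow> 'a set" where
  "product_set A B \<equiv> {a * b | a b. a \<in> A \<and> b \<in> B}"

lemma mult_in_span_products:
  assumes "a \<in> A" and "x \<in> ideal.span B"
  shows "a * x \<in> ideal.span (product_set A B)"
  using assms(2)
proof (induction rule: ideal.span_induct_alt)
  case base
  show ?case by (simp add: ideal.span_zero)
next
  case (step c b y)
  have "a * b \<in> product_set A B" using assms(1) step(1) by blast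
  then have "c * (a * b) \<in> ideal.span (product_set A B)"
    by (intro ideal.span_scale ideal.span_base)
  from ideal.span_add[OF this step(2)] show ?case by (simp add: algebra_simps)
qed

lemma ring_hom_image_span:
  assumes "additive h" and mult: "\<And>x y. h (x * y) = h x * h y" and "x \<in> ideal.span S"
  shows "h x \<in> ideal.span (h ` S)"
  using assms(3)
proof (induction rule: ideal.span_induct_alt)
  case base
  show ?case by (simp add: additive.zero[OF assms(1)] ideal.span_zero)
next
  case (step c x y)
  then show ?case
    by (simp add: additive.add[OF assms(1)] mult ideal.span_add ideal.span_scale ideal.span_base)
qed

definition coord_scale :: "'k::comm_ring_1 \<Rightarrow> ('v \<Rightarrow> 'k) \<Rightarrow> ('v \<Rightarrow> 'k)" where
  "coord_scale c x = (\<lambda>v. c * x v)"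

interpretation coord: module coord_scale
  by unfold_locales (simp_all add: coord_scale_def algebra_simps fun_eq_iff)

interpretation coord_pair: module_pair "coord_scale :: 'k::comm_ring_1 \<Rightarrow> ('v \<Rightarrow> 'k) \<Rightarrow> _"
  "coord_scale :: 'k \<Rightarrow> ('w \<Rightarrow> 'k) \<Rightarrow> _" ..

abbreviation coord_linear :: "(('v \<Rightarrow> 'k::comm_ring_1) \<Rightarrow> ('w \<Rightarrow> 'k)) \<Rightarrow> bool" where
  "coord_linear A \<equiv> module_hom coord_scale coord_scale A"

lemma coord_scale_apply [simp]: "coord_scale c x v = c * x v"
  by (simp add: coord_scale_def)

lemma lsubspace_iff_subspace: "lsubspace S \<longleftrightarrow> coord.subspace S"
  by (simp add: lsubspace_def coord.subspace_def coord_scale_def zero_fun_def plus_fun_def)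

lemma lspan_eq_span: "lspan = coord.span"
  by (simp add: fun_eq_iff lspan_def coord.span_def hull_def lsubspace_iff_subspace)

lemma sum_fun_apply: "(\<Sum>i\<in>A. f i) x = (\<Sum>i\<in>A. f i x)"
  by (induction A rule: infinite_finite_induct) auto

lemma sum_fun_eq: "(\<lambda>x. \<Sum>i\<in>A. f i x) = (\<Sum>i\<in>A. f i)"
  by (simp add: fun_eq_iff sum_fun_apply)

definition unit_vec :: "'v \<Rightarrow> 'v \<Rightarrow> 'k::zero_neq_one" where
  "unit_vec v = (\<lambda>u. if u = v then 1 else 0)"

lemma sum_unit_vec: "(\<Sum>v\<in>UNIV. coord_scale (x v) (unit_vec v)) = (x :: 'v::finite \<Rightarrow> 'k::comm_ring_1)"
proof
  fix u
  have "(\<Sum>v\<in>UNIV. x v * unit_vec v u) = (\<Sum>v\<in>UNIV. if v = u then x v else 0)"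
    by (intro sum.cong) (auto simp: unit_vec_def)
  then show "(\<Sum>v\<in>UNIV. coord_scale (x v) (unit_vec v)) u = x u"
    by (simp add: sum_fun_apply)
qed

lemma comp_right_linear: "coord_linear (\<lambda>p. p \<circ> g)"
  by unfold_locales (simp_all add: fun_eq_iff)

definition mvar :: "'v \<Rightarrow> ('v, 'k::comm_ring_1) mpoly" where
  "mvar v = Poly_Mapping.single (Poly_Mapping.single v 1) 1"

lemma mpoly_eq_sum_single:
  "f = (\<Sum>m\<in>Poly_Mapping.keys f. Poly_Mapping.single m (Poly_Mapping.lookup f m))"
  by (rule poly_mapping_eqI) (auto simp: lookup_sum lookup_single when_def in_keys_iff sum.delta)

lemma single_monomial_eq_prod_mvar:
  "Poly_Mapping.single m (1::'k::comm_ring_1)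
     = (\<Prod>v\<in>(UNIV::'v::finite set). mvar v ^ Poly_Mapping.lookup m v)"
proof -
  have power: "mvar v ^ n = Poly_Mapping.single (Poly_Mapping.single v n) (1::'k)" for v :: 'v and n
    by (induction n) (auto simp: mvar_def mult_single single_add[symmetric])
  have prod: "(\<Prod>v\<in>A. Poly_Mapping.single (Poly_Mapping.single v (n v)) (1::'k))
      = Poly_Mapping.single (\<Sum>v\<in>A. Poly_Mapping.single v (n v)) 1" for A n
    by (induction A rule: infinite_finite_induct) (auto simp: mult_single)
  have "(\<Sum>v\<in>UNIV. Poly_Mapping.single v (Poly_Mapping.lookup m v)) = m"
    by (rule poly_mapping_eqI) (simp add: lookup_sum lookup_single when_def)
  then show ?thesis
    by (simp only: power prod)
qed

lemma mpoly_induct [case_names const var add mult]: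
  fixes P :: "('v::finite, 'k::comm_ring_1) mpoly \<Rightarrow> bool"
  assumes const: "\<And>a. P (Poly_Mapping.single 0 a)" and var: "\<And>v. P (mvar v)"
    and add: "\<And>f g. P f \<Longrightarrow> P g \<Longrightarrow> P (f + g)" and mult: "\<And>f g. P f \<Longrightarrow> P g \<Longrightarrow> P (f * g)"
  shows "P f"
proof -
  have sum: "P (\<Sum>i\<in>A. h i)" if "\<And>i. P (h i)" for A and h :: "'i \<Rightarrow> ('v, 'k) mpoly"
    using that const[of 0] by (induction A rule: infinite_finite_induct) (auto intro: add)
  have prod: "P (\<Prod>i\<in>A. h i)" if "\<And>i. P (h i)" for A and h :: "'i \<Rightarrow> ('v, 'k) mpoly"
    using that const[of 1] by (induction A rule: infinite_finite_induct) (auto intro: mult)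
  have power: "P (g ^ n)" if "P g" for g n
    using that const[of 1] by (induction n) (auto intro: mult)
  have "P (Poly_Mapping.single 0 a * Poly_Mapping.single m 1)" for m a
    unfolding single_monomial_eq_prod_mvar by (intro mult const prod power var)
  then have "P (Poly_Mapping.single m a)" for m a
    by (simp add: mult_single)
  then show ?thesis
    by (subst mpoly_eq_sum_single) (intro sum)
qed

definition monomial_value :: "('v::finite \<Rightarrow> 'r::comm_ring_1) \<Rightarrow> ('v \<Rightarrow>\<^sub>0 nat) \<Rightarrow> 'r" where
  "monomial_value \<phi> m = (\<Prod>v\<in>UNIV. \<phi> v ^ Poly_Mapping.lookup m v)"

definition mpoly_eval :: "('k::comm_ring_1 \<Rightarrow> 'r::comm_ring_1) \<Rightarrow> ('v::finite \<Rightarrow> 'r)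
    \<Rightarrow> ('v, 'k) mpoly \<Rightarrow> 'r" where
  "mpoly_eval c \<phi> f = (\<Sum>m\<in>Poly_Mapping.keys f. c (Poly_Mapping.lookup f m) * monomial_value \<phi> m)"

lemma monomial_value_add: "monomial_value \<phi> (m + n) = monomial_value \<phi> m * monomial_value \<phi> n"
  by (simp add: monomial_value_def lookup_add power_add prod.distrib)

lemma monomial_value_single: "monomial_value \<phi> (Poly_Mapping.single v n) = \<phi> v ^ n"
proof -
  have "monomial_value \<phi> (Poly_Mapping.single v n) = (\<Prod>u\<in>UNIV. if u = v then \<phi> v ^ n else 1)"
    unfolding monomial_value_def by (intro prod.cong) (auto simp: lookup_single when_def)
  then show ?thesis by simp
qed

locale coeff_hom = additive c for c :: "'k::comm_ring_1 \<Rightarrow> 'r::comm_ring_1" +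
  assumes mult: "c (a * b) = c a * c b"
begin

lemma mpoly_eval_superset:
  assumes "finite M" and "Poly_Mapping.keys f \<subseteq> M"
  shows "mpoly_eval c \<phi> f = (\<Sum>m\<in>M. c (Poly_Mapping.lookup f m) * monomial_value \<phi> m)"
  unfolding mpoly_eval_def
  by (rule sum.mono_neutral_left) (use assms in \<open>auto simp: zero in_keys_iff\<close>)

lemma mpoly_eval_add: "mpoly_eval c \<phi> (f + g) = mpoly_eval c \<phi> f + mpoly_eval c \<phi> g"
proof -
  let ?M = "Poly_Mapping.keys f \<union> Poly_Mapping.keys g"
  have "mpoly_eval c \<phi> (f + g) = (\<Sum>m\<in>?M. c (Poly_Mapping.lookup (f + g) m) * monomial_value \<phi> m)"
    using keys_add[of f g] by (intro mpoly_eval_superset) auto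
  also have "\<dots> = (\<Sum>m\<in>?M. c (Poly_Mapping.lookup f m) * monomial_value \<phi> m)
      + (\<Sum>m\<in>?M. c (Poly_Mapping.lookup g m) * monomial_value \<phi> m)"
    by (simp add: lookup_add add distrib_right sum.distrib)
  also have "\<dots> = mpoly_eval c \<phi> f + mpoly_eval c \<phi> g"
    by (subst (1 2) mpoly_eval_superset[where M = ?M]) auto
  finally show ?thesis .
qed

lemma additive_mpoly_eval: "additive (mpoly_eval c \<phi>)"
  by unfold_locales (rule mpoly_eval_add)

lemma mpoly_eval_single: "mpoly_eval c \<phi> (Poly_Mapping.single m a) = c a * monomial_value \<phi> m"
  by (auto simp: mpoly_eval_def zero)

lemma mpoly_eval_mult: "mpoly_eval c \<phi> (f * g) = mpoly_eval c \<phi> f * mpoly_eval c \<phi> g"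
proof -
  note sum = additive.sum[OF additive_mpoly_eval]
  have "f * g = (\<Sum>m\<in>Poly_Mapping.keys f. \<Sum>n\<in>Poly_Mapping.keys g.
      Poly_Mapping.single (m + n) (Poly_Mapping.lookup f m * Poly_Mapping.lookup g n))"
    by (subst (1) mpoly_eq_sum_single[of f], subst (1) mpoly_eq_sum_single[of g])
       (simp add: sum_product mult_single)
  then have "mpoly_eval c \<phi> (f * g) = (\<Sum>m\<in>Poly_Mapping.keys f. \<Sum>n\<in>Poly_Mapping.keys g.
      (c (Poly_Mapping.lookup f m) * monomial_value \<phi> m)
      * (c (Poly_Mapping.lookup g n) * monomial_value \<phi> n))"
    by (simp add: sum mpoly_eval_single monomial_value_add mult mult_ac)
  also have "\<dots> = mpoly_eval c \<phi> f * mpoly_eval c \<phi> g"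
    by (simp only: mpoly_eval_def sum_product)
  finally show ?thesis .
qed

lemma mpoly_eval_mvar: "mpoly_eval c \<phi> (mvar v) = c 1 * \<phi> v"
  by (simp add: mvar_def mpoly_eval_single monomial_value_single)

lemma mpoly_eval_const: "mpoly_eval c \<phi> (Poly_Mapping.single 0 a) = c a"
  by (simp add: mpoly_eval_single monomial_value_def)

end

lemma mpoly_eval_lpoly:
  fixes c :: "'k::field \<Rightarrow> 'r::comm_ring_1"
  assumes "coeff_hom c"
  shows "mpoly_eval c \<phi> (lpoly x) = (\<Sum>v\<in>UNIV. c (x v) * \<phi> v)"
  by (simp add: lpoly_def additive.sum[OF coeff_hom.additive_mpoly_eval[OF assms]]
      coeff_hom.mpoly_eval_single[OF assms] monomial_value_single)

interpretation id_coeff: coeff_hom "\<lambda>a::'k::comm_ring_1. a"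
  by unfold_locales simp_all

interpretation const_coeff: coeff_hom "Poly_Mapping.single 0 :: 'k \<Rightarrow> ('v, 'k::comm_ring_1) mpoly"
  by unfold_locales (simp_all add: single_add mult_single)

lemma additive_lpoly: "additive (lpoly :: ('v::finite \<Rightarrow> 'k::field) \<Rightarrow> _)"
  by unfold_locales (simp add: lpoly_def single_add sum.distrib)

lemma lpoly_coord_scale: "lpoly (coord_scale a x) = Poly_Mapping.single 0 a * lpoly x"
  by (simp add: lpoly_def sum_distrib_left mult_single)

lemma lpoly_unit_vec: "lpoly (unit_vec v) = mvar v"
proof -
  have "lpoly (unit_vec v) = (\<Sum>u\<in>UNIV. if u = v then mvar v else 0)"
    unfolding lpoly_def mvar_def by (intro sum.cong) (auto simp: unit_vec_def)
  then show ?thesis by simp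
qed

definition pairing :: "('v::finite \<Rightarrow> 'k::comm_ring_1) \<Rightarrow> ('v \<Rightarrow> 'k) \<Rightarrow> 'k" where
  "pairing p x = (\<Sum>v\<in>UNIV. x v * p v)"

lemma pairing_0_left [simp]: "pairing 0 x = 0"
  by (simp add: pairing_def)

lemma pairing_linear_right: "module_hom coord_scale (*) (pairing p)"
  by unfold_locales (simp_all add: pairing_def algebra_simps sum.distrib sum_distrib_left)

lemma pairing_linear_left: "module_hom coord_scale (*) (\<lambda>p. pairing p x)"
  by unfold_locales (simp_all add: pairing_def algebra_simps sum.distrib sum_distrib_left)

lemma pairing_unit_vec: "pairing p (unit_vec u) = p u"
proof -
  have "pairing p (unit_vec u) = (\<Sum>v\<in>UNIV. if v = u then p v else 0)"
    unfolding pairing_def by (intro sum.cong) (auto simp: unit_vec_def)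
  then show ?thesis by simp
qed

lemma pairing_eq_0_iff: "(\<forall>x. pairing p x = 0) \<longleftrightarrow> p = 0"
  by (metis pairing_unit_vec module_hom.zero[OF pairing_linear_left] zero_fun_apply ext)

lemma peval_eq_mpoly_eval: "peval p f = mpoly_eval (\<lambda>a. a) p f"
  unfolding peval_def mpoly_eval_def monomial_value_def
  by (intro sum.cong arg_cong2[where f = "(*)"] prod.mono_neutral_left) (auto simp: in_keys_iff)

lemma peval_lpoly: "peval p (lpoly x) = pairing p x"
  by (simp add: peval_eq_mpoly_eval mpoly_eval_lpoly id_coeff.coeff_hom_axioms pairing_def)

lemma zero_locus_ideal_gen:
  "zero_locus (ideal_gen G) = zero_locus (G :: ('v::finite, 'k::field) mpoly set)"
proof
  show "zero_locus (ideal_gen G) \<subseteq> zero_locus G"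
    unfolding zero_locus_def ideal_gen_eq_span using ideal.span_superset by blast
  show "zero_locus G \<subseteq> zero_locus (ideal_gen G)"
  proof
    fix p assume "p \<in> zero_locus G"
    moreover have "ideal.subspace {f. peval p f = 0}"
      by (simp add: ideal.subspace_def peval_eq_mpoly_eval id_coeff.mpoly_eval_add
          id_coeff.mpoly_eval_mult additive.zero[OF id_coeff.additive_mpoly_eval])
    ultimately have "ideal.span G \<subseteq> {f. peval p f = 0}"
      unfolding zero_locus_def by (intro ideal.span_minimal) auto
    then show "p \<in> zero_locus (ideal_gen G)"
      by (auto simp: zero_locus_def ideal_gen_eq_span)
  qed
qed

lemma lin_space_eq_annihilator: "lin_space Q = {p. \<forall>x\<in>Q. pairing p x = 0}"
  unfolding lin_space_def zero_locus_ideal_gen by (auto simp: zero_locus_def peval_lpoly)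

lemma lin_space_span: "lin_space (coord.span Q) = lin_space Q"
proof -
  have "Q \<subseteq> {x. pairing p x = 0} \<longleftrightarrow> coord.span Q \<subseteq> {x. pairing p x = 0}" for p
    using coord.span_superset coord.span_minimal module_hom.subspace_kernel[OF pairing_linear_right]
    by blast
  then show ?thesis
    unfolding lin_space_eq_annihilator by blast
qed

section \<open>Linear substitutions\<close>

definition linear_subst :: "(('v::finite \<Rightarrow> 'k::field) \<Rightarrow> ('v \<Rightarrow> 'k)) \<Rightarrow> ('v, 'k) mpoly \<Rightarrow> ('v, 'k) mpoly"
  where "linear_subst A = mpoly_eval (Poly_Mapping.single 0) (\<lambda>v. lpoly (A (unit_vec v)))"

lemma additive_linear_subst: "additive (linear_subst A)"
  unfolding linear_subst_def by (rule const_coeff.additive_mpoly_eval)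

lemma linear_subst_mult: "linear_subst A (f * g) = linear_subst A f * linear_subst A g"
  by (simp add: linear_subst_def const_coeff.mpoly_eval_mult)

lemma linear_subst_const: "linear_subst A (Poly_Mapping.single 0 a) = Poly_Mapping.single 0 a"
  by (simp add: linear_subst_def const_coeff.mpoly_eval_const)

lemma linear_subst_mvar: "linear_subst A (mvar v) = lpoly (A (unit_vec v))"
  by (simp add: linear_subst_def const_coeff.mpoly_eval_mvar)

lemma linear_subst_lpoly:
  assumes "coord_linear A"
  shows "linear_subst A (lpoly x) = lpoly (A x)"
proof -
  have "linear_subst A (lpoly x)
      = (\<Sum>v\<in>UNIV. lpoly (coord_scale (x v) (A (unit_vec v))))"
    by (simp add: linear_subst_def mpoly_eval_lpoly const_coeff.coeff_hom_axioms lpoly_coord_scale)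
  also have "\<dots> = lpoly (A (\<Sum>v\<in>UNIV. coord_scale (x v) (unit_vec v)))"
    by (simp add: module_hom.sum[OF assms] module_hom.scale[OF assms] additive.sum[OF additive_lpoly])
  finally show ?thesis by (simp only: sum_unit_vec)
qed

lemma linear_subst_id: "linear_subst (\<lambda>x. x) f = f"
  by (induction f rule: mpoly_induct)
     (simp_all add: linear_subst_const linear_subst_mvar lpoly_unit_vec linear_subst_mult
       additive.add[OF additive_linear_subst])

lemma linear_subst_in_span:
  assumes "coord_linear A" and "f \<in> ideal.span (lpoly ` G)"
  shows "linear_subst A f \<in> ideal.span (lpoly ` A ` G)"
proof -
  have "linear_subst A f \<in> ideal.span (linear_subst A ` lpoly ` G)"
    using assms(2) by (intro ring_hom_image_span additive_linear_subst linear_subst_mult)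
  also have "linear_subst A ` lpoly ` G = lpoly ` A ` G"
    by (force simp: linear_subst_lpoly[OF assms(1)])
  finally show ?thesis .
qed

lemma linear_subst_diff_in_span:
  assumes "\<And>w. A w - B w \<in> D"
  shows "linear_subst A f - linear_subst B f \<in> ideal.span (lpoly ` D)"
proof (induction f rule: mpoly_induct)
  case (const a)
  show ?case by (simp add: linear_subst_const ideal.span_zero)
next
  case (var v)
  show ?case
    using assms by (simp add: linear_subst_mvar ideal.span_base flip: additive.diff[OF additive_lpoly])
next
  case (add f g)
  have "linear_subst A (f + g) - linear_subst B (f + g)
      = (linear_subst A f - linear_subst B f) + (linear_subst A g - linear_subst B g)"
    by (simp add: additive.add[OF additive_linear_subst])
  then show ?case
    using add by (simp add: ideal.span_add)
next
  case (mult f g)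
  have "linear_subst A (f * g) - linear_subst B (f * g)
      = linear_subst A f * (linear_subst A g - linear_subst B g)
        + (linear_subst A f - linear_subst B f) * linear_subst B g"
    by (simp add: linear_subst_mult algebra_simps)
  then show ?case
    using mult by (simp add: ideal.span_add ideal.span_scale mult.commute[of _ "linear_subst B g"])
qed

text \<open>For f = \<open>\<Sum> a\<^sub>k * lpoly t\<^sub>k\<close> with \<open>t\<^sub>k \<in> T\<close>, the difference is
  \<open>\<Sum> (linear_subst A a\<^sub>k - linear_subst B a\<^sub>k) * lpoly (B t\<^sub>k)\<close>.\<close>

lemma linear_subst_diff_in_product_span:
  assumes A: "coord_linear A" and B: "coord_linear B"
    and diff: "\<And>w. A w - B w \<in> D"
    and agree: "\<And>t. t \<in> T \<Longrightarrow> A t = B t" and closed: "\<And>t. t \<in> T \<Longrightarrow> B t \<in> T"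
    and "f \<in> ideal.span (lpoly ` T)"
  shows "linear_subst A f - linear_subst B f
    \<in> ideal.span (product_set (lpoly ` T) (lpoly ` D))"
  using assms(6)
proof (induction rule: ideal.span_induct_alt)
  case base
  show ?case by (simp add: additive.zero[OF additive_linear_subst] ideal.span_zero)
next
  case (step a g y)
  then obtain t where t: "t \<in> T" and g: "g = lpoly t" by blast
  have "linear_subst A (a * g + y) - linear_subst B (a * g + y)
      = lpoly (B t) * (linear_subst A a - linear_subst B a) + (linear_subst A y - linear_subst B y)"
    by (simp add: g additive.add[OF additive_linear_subst] linear_subst_mult
        linear_subst_lpoly[OF A] linear_subst_lpoly[OF B] agree[OF t] algebra_simps)
  moreover have "lpoly (B t) * (linear_subst A a - linear_subst B a)
      \<in> ideal.span (product_set (lpoly ` T) (lpoly ` D))"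
    using closed[OF t] by (intro mult_in_span_products linear_subst_diff_in_span diff) auto
  ultimately show ?case
    using step(2) by (simp add: ideal.span_add)
qed

lemma extl_apply [simp]: "extl x (Inl a) = x a" "extl x (Inr b) = 0"
  by (simp_all add: extl_def)

lemma extr_apply [simp]: "extr y (Inl a) = 0" "extr y (Inr b) = y b"
  by (simp_all add: extr_def)

lemma extl_comp_inj [simp]: "extl x \<circ> Inl = x" "extl x \<circ> Inr = 0"
  by (simp_all add: fun_eq_iff)

lemma extr_comp_inj [simp]: "extr y \<circ> Inl = 0" "extr y \<circ> Inr = y"
  by (simp_all add: fun_eq_iff)

lemma extr_linear: "coord_linear extr"
  by unfold_locales (simp_all add: fun_eq_iff extr_def split: sum.split)

lemma extl_add_extr_restrict: "extl (t \<circ> Inl) + extr (t \<circ> Inr) = (t :: 'a + 'b \<Rightarrow> 'k::monoid_add)"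
proof
  fix z
  show "(extl (t \<circ> Inl) + extr (t \<circ> Inr)) z = t z" by (cases z) simp_all
qed

lemma pairing_Plus: "pairing p z = pairing (p \<circ> Inl) (z \<circ> Inl) + pairing (p \<circ> Inr) (z \<circ> Inr)"
  unfolding pairing_def by (subst UNIV_Plus_UNIV[symmetric], subst sum.Plus) (simp_all add: comp_def)

lemma pairing_extl: "pairing p (extl x) = pairing (p \<circ> Inl) x"
  unfolding pairing_Plus[of p] by (simp add: comp_def pairing_def)

lemma pairing_extr: "pairing p (extr y) = pairing (p \<circ> Inr) y"
  unfolding pairing_Plus[of p] by (simp add: comp_def pairing_def)

lemma extl_subset_tildeQ: "extl ` Q i \<subseteq> tildeQ Q F l i"
  unfolding tildeQ_def lspan_eq_span by (rule order_trans[OF Un_upper1 coord.span_superset])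

lemma extr_subset_tildeQ: "j \<in> {1..l} \<Longrightarrow> j \<noteq> i \<Longrightarrow> extr ` F j \<subseteq> tildeQ Q F l i"
  unfolding tildeQ_def lspan_eq_span by (rule order_trans[OF _ coord.span_superset]) auto

lemma lin_space_tildeQ:
  "p \<in> lin_space (tildeQ Q F l i) \<longleftrightarrow>
     p \<circ> Inl \<in> lin_space (Q i) \<and> (\<forall>j\<in>{1..l} - {i}. \<forall>y\<in>F j. pairing (p \<circ> Inr) y = 0)"
  unfolding tildeQ_def lspan_eq_span lin_space_span
  by (simp add: lin_space_eq_annihilator pairing_extl pairing_extr ball_Un)

lemma lin_space_extl_range_extr:
  "p \<in> lin_space (extl ` Q \<union> range extr) \<longleftrightarrow> p \<circ> Inl \<in> lin_space Q \<and> p \<circ> Inr = 0"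
  by (simp add: lin_space_eq_annihilator pairing_extl pairing_extr ball_Un flip: pairing_eq_0_iff)

lemma comp_Inl_in_span_lin_space_tildeQ:
  assumes "p \<in> lspan (\<Union>j\<in>J. lin_space (tildeQ Q F l j))"
  shows "p \<circ> Inl \<in> lspan (\<Union>j\<in>J. lin_space (Q j))"
proof -
  have "p \<circ> Inl \<in> (\<lambda>q. q \<circ> Inl) ` coord.span (\<Union>j\<in>J. lin_space (tildeQ Q F l j))"
    using assms by (simp add: lspan_eq_span)
  also have "\<dots> = coord.span ((\<lambda>q. q \<circ> Inl) ` (\<Union>j\<in>J. lin_space (tildeQ Q F l j)))"
    by (rule module_hom.span_image[OF comp_right_linear, symmetric])
  also have "\<dots> \<subseteq> coord.span (\<Union>j\<in>J. lin_space (Q j))"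
    by (intro coord.span_mono) (auto simp: lin_space_tildeQ)
  finally show ?thesis
    by (simp only: lspan_eq_span)
qed

lemma span_products_subset_Inter_tildeQ:
  fixes Q :: "nat \<Rightarrow> ('a::finite \<Rightarrow> 'k::field) set" and F :: "nat \<Rightarrow> ('b::finite \<Rightarrow> 'k) set"
  shows "ideal.span ((\<Inter>i\<in>{1..l}. ideal.span (lpoly ` extl ` Q i))
      \<union> (\<Union>i\<in>{1..l}. product_set (lpoly ` tildeQ Q F l i) (lpoly ` extr ` F i)))
    \<subseteq> (\<Inter>i\<in>{1..l}. ideal.span (lpoly ` tildeQ Q F l i))"
proof (intro ideal.span_minimal ideal.subspace_Int ideal.subspace_span Un_least subsetI INT_I)
  fix f :: "('a + 'b, 'k) mpoly" and k
  assume "f \<in> (\<Inter>i\<in>{1..l}. ideal.span (lpoly ` extl ` Q i))" and "k \<in> {1..l}"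
  then have "f \<in> ideal.span (lpoly ` extl ` Q k)" by blast
  then show "f \<in> ideal.span (lpoly ` tildeQ Q F l k)"
    using ideal.span_mono[OF image_mono[OF extl_subset_tildeQ]] by blast
next
  fix f :: "('a + 'b, 'k) mpoly" and k
  assume "f \<in> (\<Union>i\<in>{1..l}. product_set (lpoly ` tildeQ Q F l i) (lpoly ` extr ` F i))"
    and "k \<in> {1..l}"
  then obtain i g h where i: "i \<in> {1..l}" and g: "g \<in> lpoly ` tildeQ Q F l i"
    and h: "h \<in> lpoly ` extr ` F i" and f: "f = g * h"
    by blast
  show "f \<in> ideal.span (lpoly ` tildeQ Q F l k)"
  proof (cases "k = i")
    case True
    then show ?thesis
      using g by (simp add: f mult.commute[of g] ideal.span_scale ideal.span_base)
  next
    case False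
    then have "extr ` F i \<subseteq> tildeQ Q F l k"
      using i by (intro extr_subset_tildeQ) auto
    then have "h \<in> lpoly ` tildeQ Q F l k"
      using h by blast
    then show ?thesis
      by (simp add: f ideal.span_scale ideal.span_base)
  qed
qed

locale direct_sum =
  fixes F :: "nat \<Rightarrow> ('b::finite \<Rightarrow> 'k::field) set" and l :: nat
  assumes decomp: "direct_sum_decomp F l"
begin

lemma summand_subspace: "j \<in> {1..l} \<Longrightarrow> coord.subspace (F j)"
  using decomp by (simp add: direct_sum_decomp_def lsubspace_iff_subspace)

definition component :: "('b \<Rightarrow> 'k) \<Rightarrow> nat \<Rightarrow> ('b \<Rightarrow> 'k)" where
  "component v = (SOME f. (\<forall>j\<in>{1..l}. f j \<in> F j) \<and> v = (\<Sum>j\<in>{1..l}. f j))"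

lemma component_in: "j \<in> {1..l} \<Longrightarrow> component v j \<in> F j"
  and sum_component: "(\<Sum>j\<in>{1..l}. component v j) = v"
proof -
  have "\<exists>f. (\<forall>j\<in>{1..l}. f j \<in> F j) \<and> v = (\<Sum>j\<in>{1..l}. f j)"
    using decomp unfolding direct_sum_decomp_def sum_fun_eq by blast
  then have "(\<forall>j\<in>{1..l}. component v j \<in> F j) \<and> v = (\<Sum>j\<in>{1..l}. component v j)"
    unfolding component_def by (rule someI_ex)
  then show "j \<in> {1..l} \<Longrightarrow> component v j \<in> F j" and "(\<Sum>j\<in>{1..l}. component v j) = v"
    by auto
qed

lemma summands_eq_0_if_sum_eq_0:
  assumes "\<And>j. j \<in> {1..l} \<Longrightarrow> f j \<in> F j" and "(\<Sum>j\<in>{1..l}. f j) = 0" and "j \<in> {1..l}"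
  shows "f j = 0"
proof -
  have "(\<lambda>x. \<Sum>j\<in>{1..l}. f j x) = (\<lambda>_. 0)"
    using assms(2) by (simp add: sum_fun_eq zero_fun_def)
  then have "f j = (\<lambda>_. 0)"
    using decomp assms(1,3) unfolding direct_sum_decomp_def by blast
  then show ?thesis by (simp add: zero_fun_def)
qed

lemma component_unique:
  assumes "\<And>j. j \<in> {1..l} \<Longrightarrow> f j \<in> F j" and "(\<Sum>j\<in>{1..l}. f j) = v" and "j \<in> {1..l}"
  shows "component v j = f j"
proof -
  have in_summand: "component v i - f i \<in> F i" if "i \<in> {1..l}" for i
    using that assms(1) by (intro coord.subspace_diff summand_subspace component_in)
  have "(\<Sum>i\<in>{1..l}. component v i - f i) = 0"
    by (simp only: sum_subtractf sum_component assms(2) diff_self)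
  from summands_eq_0_if_sum_eq_0[where f = "\<lambda>i. component v i - f i", OF in_summand this assms(3)]
  have "component v j - f j = 0" by simp
  then show ?thesis by simp
qed

lemma component_linear: "j \<in> {1..l} \<Longrightarrow> coord_linear (\<lambda>v. component v j)"
proof unfold_locales
  fix x y :: "'b \<Rightarrow> 'k" and c :: 'k
  assume j: "j \<in> {1..l}"
  show "component (x + y) j = component x j + component y j"
  proof (rule component_unique[where f = "\<lambda>i. component x i + component y i", OF _ _ j])
    show "component x i + component y i \<in> F i" if "i \<in> {1..l}" for i
      using that by (intro coord.subspace_add summand_subspace component_in)
    show "(\<Sum>i\<in>{1..l}. component x i + component y i) = x + y"
      by (simp only: sum.distrib sum_component)
  qed
  show "component (coord_scale c x) j = coord_scale c (component x j)"
  proof (rule component_unique[where f = "\<lambda>i. coord_scale c (component x i)", OF _ _ j])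
    show "coord_scale c (component x i) \<in> F i" if "i \<in> {1..l}" for i
      using that by (intro coord.subspace_scale summand_subspace component_in)
    show "(\<Sum>i\<in>{1..l}. coord_scale c (component x i)) = coord_scale c x"
      by (simp only: sum_component flip: coord.scale_sum_right)
  qed
qed

lemma component_zero [simp]: "j \<in> {1..l} \<Longrightarrow> component 0 j = 0"
  by (rule module_hom.zero[OF component_linear])

lemma component_summand:
  assumes "i \<in> {1..l}" and "y \<in> F i" and "j \<in> {1..l}"
  shows "component y j = (if j = i then y else 0)"
proof (rule component_unique[where f = "\<lambda>j. if j = i then y else 0", OF _ _ assms(3)])
  show "(if j = i then y else 0) \<in> F j" if "j \<in> {1..l}" for j
    using that assms(2) by (simp add: summand_subspace coord.subspace_0)
  show "(\<Sum>j\<in>{1..l}. if j = i then y else 0) = y"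
    using assms(1) by simp
qed

lemma orthogonal_to_summands_eq_0:
  assumes "\<And>j y. j \<in> {1..l} \<Longrightarrow> y \<in> F j \<Longrightarrow> pairing p y = 0"
  shows "p = 0"
proof -
  have "pairing p x = 0" for x
  proof -
    have "pairing p x = pairing p (\<Sum>j\<in>{1..l}. component x j)"
      by (simp only: sum_component)
    also have "\<dots> = (\<Sum>j\<in>{1..l}. pairing p (component x j))"
      by (rule module_hom.sum[OF pairing_linear_right])
    finally show ?thesis
      using assms component_in by simp
  qed
  then show ?thesis
    by (simp flip: pairing_eq_0_iff)
qed

section \<open>The linearly joined sequence\<close>

lemma lin_space_tildeQ_Int:
  assumes "i \<in> {1..l}" and "j \<in> {1..l}" and "i \<noteq> j"
  shows "lin_space (tildeQ Q F l i) \<inter> lin_space (tildeQ Q F l j)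
    = lin_space (extl ` Q i \<union> range extr) \<inter> lin_space (extl ` Q j \<union> range extr)"
proof (intro equalityI subsetI)
  fix p assume p: "p \<in> lin_space (tildeQ Q F l i) \<inter> lin_space (tildeQ Q F l j)"
  have "p \<circ> Inr = 0"
  proof (rule orthogonal_to_summands_eq_0)
    fix k y assume "k \<in> {1..l}" and "y \<in> F k"
    then show "pairing (p \<circ> Inr) y = 0"
      using p assms(3) by (cases "k = i") (auto simp: lin_space_tildeQ)
  qed
  then show "p \<in> lin_space (extl ` Q i \<union> range extr) \<inter> lin_space (extl ` Q j \<union> range extr)"
    using p by (simp add: lin_space_tildeQ lin_space_extl_range_extr)
qed (simp add: lin_space_tildeQ lin_space_extl_range_extr)

lemma lin_space_tildeQ_Int_UN:
  assumes "i \<in> {2..l}"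
  shows "lin_space (tildeQ Q F l i) \<inter> (\<Union>j\<in>{1..<i}. lin_space (tildeQ Q F l j))
    = lin_space (extl ` Q i \<union> range extr) \<inter> (\<Union>j\<in>{1..<i}. lin_space (extl ` Q j \<union> range extr))"
proof -
  have "lin_space (tildeQ Q F l i) \<inter> lin_space (tildeQ Q F l j)
      = lin_space (extl ` Q i \<union> range extr) \<inter> lin_space (extl ` Q j \<union> range extr)"
    if "j \<in> {1..<i}" for j
    using assms that by (intro lin_space_tildeQ_Int) auto
  then show ?thesis
    unfolding Int_UN_distrib by (rule SUP_cong[OF refl])
qed

lemma comp_Inr_eq_0_if_in_span_tildeQ:
  assumes "i \<in> {1..l}" and "i \<notin> J" and "p \<in> lin_space (tildeQ Q F l i)"
    and "p \<in> lspan (\<Union>j\<in>J. lin_space (tildeQ Q F l j))"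
  shows "p \<circ> Inr = 0"
proof -
  let ?S = "\<Inter>y\<in>F i. {q. pairing (q \<circ> Inr) y = 0}"
  have "coord.subspace ?S"
    using module_hom.subspace_kernel[OF module_hom_compose[OF comp_right_linear pairing_linear_left]]
    by (intro coord.subspace_Int) simp
  moreover have "(\<Union>j\<in>J. lin_space (tildeQ Q F l j)) \<subseteq> ?S"
    using assms(1,2) by (auto simp: lin_space_tildeQ dest!: bspec[where x = i])
  ultimately have "lspan (\<Union>j\<in>J. lin_space (tildeQ Q F l j)) \<subseteq> ?S"
    unfolding lspan_eq_span by (intro coord.span_minimal)
  then have "p \<in> ?S"
    using assms(4) by blast
  then show ?thesis
    using assms(3) by (intro orthogonal_to_summands_eq_0) (auto simp: lin_space_tildeQ)
qed

lemma linearly_joined_tildeQ: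
  assumes "linearly_joined (\<lambda>i. lin_space (Q i)) l"
  shows "linearly_joined (\<lambda>i. lin_space (tildeQ Q F l i)) l"
  unfolding linearly_joined_def
proof (intro ballI equalityI)
  fix i assume i: "i \<in> {1..<l}"
  let ?T = "\<lambda>j. lin_space (tildeQ Q F l j)" and ?L = "\<lambda>j. lin_space (Q j)"
  show "?T (Suc i) \<inter> (\<Union>j\<in>{1..i}. ?T j) \<subseteq> ?T (Suc i) \<inter> lspan (\<Union>j\<in>{1..i}. ?T j)"
    by (auto simp: lspan_eq_span intro: coord.span_base)
  show "?T (Suc i) \<inter> lspan (\<Union>j\<in>{1..i}. ?T j) \<subseteq> ?T (Suc i) \<inter> (\<Union>j\<in>{1..i}. ?T j)"
  proof
    fix p assume p: "p \<in> ?T (Suc i) \<inter> lspan (\<Union>j\<in>{1..i}. ?T j)"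
    then have "p \<circ> Inr = 0"
      using i by (intro comp_Inr_eq_0_if_in_span_tildeQ[of "Suc i" "{1..i}"]) auto
    have "p \<circ> Inl \<in> ?L (Suc i) \<inter> lspan (\<Union>j\<in>{1..i}. ?L j)"
      using p comp_Inl_in_span_lin_space_tildeQ by (auto simp: lin_space_tildeQ)
    then obtain j where "j \<in> {1..i}" and "p \<circ> Inl \<in> ?L j"
      using assms i unfolding linearly_joined_def by blast
    then show "p \<in> ?T (Suc i) \<inter> (\<Union>j\<in>{1..i}. ?T j)"
      using p \<open>p \<circ> Inr = 0\<close> by (auto simp: lin_space_tildeQ)
  qed
qed

section \<open>The ideal of the union\<close>

lemma tildeQ_eq:
  assumes "coord.subspace (Q i)" and "i \<in> {1..l}"
  shows "tildeQ Q F l i = {t. t \<circ> Inl \<in> Q i \<and> component (t \<circ> Inr) i = 0}"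
proof (intro equalityI subsetI)
  let ?G = "extl ` Q i \<union> (\<Union>j\<in>{1..l} - {i}. extr ` F j)"
  have "coord.subspace ((\<lambda>t. t \<circ> Inl) -` Q i)"
    by (rule module_hom.subspace_vimage[OF comp_right_linear assms(1)])
  moreover have "coord.subspace {t. component (t \<circ> Inr) i = 0}"
    using module_hom.subspace_kernel[OF
        module_hom_compose[OF comp_right_linear component_linear[OF assms(2)]]]
    by simp
  ultimately have "coord.subspace {t. t \<circ> Inl \<in> Q i \<and> component (t \<circ> Inr) i = 0}"
    unfolding vimage_def Collect_conj_eq by (rule coord.subspace_inter)
  moreover have "?G \<subseteq> {t. t \<circ> Inl \<in> Q i \<and> component (t \<circ> Inr) i = 0}"
    using assms by (auto simp: coord.subspace_0 component_summand)
  ultimately have "coord.span ?G \<subseteq> {t. t \<circ> Inl \<in> Q i \<and> component (t \<circ> Inr) i = 0}"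
    by (intro coord.span_minimal)
  then show "t \<in> {t. t \<circ> Inl \<in> Q i \<and> component (t \<circ> Inr) i = 0}" if "t \<in> tildeQ Q F l i" for t
    using that by (auto simp: tildeQ_def lspan_eq_span)
next
  let ?G = "extl ` Q i \<union> (\<Union>j\<in>{1..l} - {i}. extr ` F j)"
  fix t assume t: "t \<in> {t. t \<circ> Inl \<in> Q i \<and> component (t \<circ> Inr) i = 0}"
  have "t = extl (t \<circ> Inl) + extr (\<Sum>j\<in>{1..l}. component (t \<circ> Inr) j)"
    by (simp only: sum_component extl_add_extr_restrict)
  also have "\<dots> = extl (t \<circ> Inl) + (\<Sum>j\<in>{1..l}. extr (component (t \<circ> Inr) j))"
    by (simp only: module_hom.sum[OF extr_linear])
  also have "\<dots> \<in> coord.span ?G"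
  proof (intro coord.span_add coord.span_sum)
    show "extl (t \<circ> Inl) \<in> coord.span ?G"
      using t by (intro coord.span_base) auto
    show "extr (component (t \<circ> Inr) j) \<in> coord.span ?G" if "j \<in> {1..l}" for j
    proof (cases "j = i")
      case True
      then show ?thesis
        using t by (simp add: module_hom.zero[OF extr_linear] coord.span_zero)
    next
      case False
      then have "extr (component (t \<circ> Inr) j) \<in> ?G"
        using that component_in[OF that] by blast
      then show ?thesis by (rule coord.span_base)
    qed
  qed
  finally show "t \<in> tildeQ Q F l i"
    by (simp add: tildeQ_def lspan_eq_span)
qed

definition kill_summands :: "nat \<Rightarrow> ('a + 'b \<Rightarrow> 'k) \<Rightarrow> ('a + 'b \<Rightarrow> 'k)" where
  "kill_summands k t = t - (\<Sum>j\<in>{1..k}. extr (component (t \<circ> Inr) j))"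

lemma kill_summands_linear:
  assumes "k \<le> l"
  shows "coord_linear (kill_summands k)"
proof -
  have "coord_linear (\<lambda>t. extr (component (t \<circ> Inr) j))" if "j \<in> {1..k}" for j
  proof -
    have j: "j \<in> {1..l}" using that assms by auto
    have "coord_linear (extr \<circ> ((\<lambda>v. component v j) \<circ> (\<lambda>t. t \<circ> Inr)))"
      by (rule module_hom_compose[OF module_hom_compose[OF comp_right_linear component_linear[OF j]]
            extr_linear])
    then show ?thesis by (simp add: comp_def)
  qed
  then show ?thesis
    unfolding kill_summands_def[abs_def]
    by (intro coord_pair.module_hom_sub coord.module_hom_ident coord_pair.module_hom_sum)
       (auto intro: coord.module_axioms)
qed

lemma kill_summands_0: "kill_summands 0 = (\<lambda>t. t)"
  by (simp add: kill_summands_def fun_eq_iff)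

lemma kill_summands_diff_Suc:
  "kill_summands k t - kill_summands (Suc k) t = extr (component (t \<circ> Inr) (Suc k))"
  by (simp add: kill_summands_def atLeastAtMostSuc_conv)

lemma kill_summands_comp_inj:
  "kill_summands k t \<circ> Inl = t \<circ> Inl"
  "kill_summands k t \<circ> Inr = (t \<circ> Inr) - (\<Sum>j\<in>{1..k}. component (t \<circ> Inr) j)"
  by (simp_all add: kill_summands_def module_hom.diff[OF comp_right_linear]
      module_hom.sum[OF comp_right_linear])

lemma kill_summands_all: "kill_summands l t = extl (t \<circ> Inl)"
proof -
  have "kill_summands l t = t - extr (\<Sum>j\<in>{1..l}. component (t \<circ> Inr) j)"
    by (simp only: kill_summands_def module_hom.sum[OF extr_linear])
  also have "\<dots> = t - extr (t \<circ> Inr)"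
    by (simp only: sum_component)
  finally have "kill_summands l t = t - extr (t \<circ> Inr)" .
  then show ?thesis
    by (metis extl_add_extr_restrict add_diff_cancel_right')
qed

lemma component_kill_summands:
  assumes "k \<le> l" and "i \<in> {1..l}"
  shows "component (kill_summands k t \<circ> Inr) i = (if i \<le> k then 0 else component (t \<circ> Inr) i)"
proof -
  have "component (component (t \<circ> Inr) j) i = (if i = j then component (t \<circ> Inr) j else 0)"
    if "j \<in> {1..k}" for j
    using that assms by (simp add: component_summand component_in)
  then have "(\<Sum>j\<in>{1..k}. component (component (t \<circ> Inr) j) i)
      = (if i \<le> k then component (t \<circ> Inr) i else 0)"
    using assms(2) by (simp add: sum.delta)
  then show ?thesis
    by (simp add: kill_summands_comp_inj module_hom.diff[OF component_linear[OF assms(2)]]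
        module_hom.sum[OF component_linear[OF assms(2)]])
qed

lemma kill_summands_tildeQ:
  assumes "coord.subspace (Q i)" and "i \<in> {1..l}" and "k \<le> l" and "t \<in> tildeQ Q F l i"
  shows "kill_summands k t \<in> tildeQ Q F l i"
  using assms by (simp add: tildeQ_eq kill_summands_comp_inj(1) component_kill_summands)

lemma kill_summands_Suc_eq:
  assumes "coord.subspace (Q (Suc k))" and "Suc k \<le> l" and "t \<in> tildeQ Q F l (Suc k)"
  shows "kill_summands k t = kill_summands (Suc k) t"
proof -
  have "component (t \<circ> Inr) (Suc k) = 0"
    using assms by (simp add: tildeQ_eq)
  then have "kill_summands k t - kill_summands (Suc k) t = 0"
    by (simp add: kill_summands_diff_Suc module_hom.zero[OF extr_linear])
  then show ?thesis by simp
qed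

lemma kill_summands_all_tildeQ:
  assumes "coord.subspace (Q i)" and "i \<in> {1..l}" and "t \<in> tildeQ Q F l i"
  shows "kill_summands l t \<in> extl ` Q i"
  using assms by (simp add: tildeQ_eq kill_summands_all)

lemma diff_subst_kill_summands_in_span_products:
  fixes Q :: "nat \<Rightarrow> ('a::finite \<Rightarrow> 'k) set"
  assumes Q: "\<And>i. i \<in> {1..l} \<Longrightarrow> coord.subspace (Q i)"
    and f: "\<And>i. i \<in> {1..l} \<Longrightarrow> f \<in> ideal.span (lpoly ` tildeQ Q F l i)"
    and "k \<le> l"
  shows "f - linear_subst (kill_summands k) f \<in> ideal.span
    (\<Union>i\<in>{1..l}. product_set (lpoly ` tildeQ Q F l i) (lpoly ` extr ` F i))"
  using \<open>k \<le> l\<close>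
proof (induction k)
  case 0
  show ?case by (simp add: kill_summands_0 linear_subst_id ideal.span_zero)
next
  case (Suc k)
  let ?T = "tildeQ Q F l (Suc k)"
  have "Suc k \<in> {1..l}" using Suc.prems by simp
  have "linear_subst (kill_summands k) f - linear_subst (kill_summands (Suc k)) f
      \<in> ideal.span (product_set (lpoly ` ?T) (lpoly ` extr ` F (Suc k)))"
  proof (rule linear_subst_diff_in_product_span)
    show "coord_linear (kill_summands k)" and "coord_linear (kill_summands (Suc k))"
      using Suc.prems by (simp_all add: kill_summands_linear)
    show "kill_summands k w - kill_summands (Suc k) w \<in> extr ` F (Suc k)" for w
      using component_in[OF \<open>Suc k \<in> {1..l}\<close>] by (simp add: kill_summands_diff_Suc)
    show "kill_summands k t = kill_summands (Suc k) t" if "t \<in> ?T" for t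
      using that Q[OF \<open>Suc k \<in> {1..l}\<close>] Suc.prems by (rule kill_summands_Suc_eq[rotated 2])
    show "kill_summands (Suc k) t \<in> ?T" if "t \<in> ?T" for t
      using that Q[OF \<open>Suc k \<in> {1..l}\<close>] Suc.prems
      by (intro kill_summands_tildeQ[OF _ \<open>Suc k \<in> {1..l}\<close>])
    show "f \<in> ideal.span (lpoly ` ?T)"
      using f \<open>Suc k \<in> {1..l}\<close> .
  qed
  also have "\<dots> \<subseteq> ideal.span
      (\<Union>i\<in>{1..l}. product_set (lpoly ` tildeQ Q F l i) (lpoly ` extr ` F i))"
    using \<open>Suc k \<in> {1..l}\<close> by (intro ideal.span_mono) blast
  finally have "linear_subst (kill_summands k) f - linear_subst (kill_summands (Suc k)) f
      \<in> ideal.span (\<Union>i\<in>{1..l}. product_set (lpoly ` tildeQ Q F l i) (lpoly ` extr ` F i))" .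
  from ideal.span_add[OF Suc.IH[OF Suc_leD[OF Suc.prems]] this] show ?case
    by simp
qed

lemma Inter_tildeQ_eq_span_products:
  fixes Q :: "nat \<Rightarrow> ('a::finite \<Rightarrow> 'k) set"
  assumes Q: "\<And>i. i \<in> {1..l} \<Longrightarrow> coord.subspace (Q i)"
  shows "(\<Inter>i\<in>{1..l}. ideal.span (lpoly ` tildeQ Q F l i))
    = ideal.span ((\<Inter>i\<in>{1..l}. ideal.span (lpoly ` extl ` Q i))
      \<union> (\<Union>i\<in>{1..l}. product_set (lpoly ` tildeQ Q F l i) (lpoly ` extr ` F i)))"
    (is "_ = ideal.span (?E \<union> ?P)")
proof (intro equalityI subsetI)
  fix f assume "f \<in> (\<Inter>i\<in>{1..l}. ideal.span (lpoly ` tildeQ Q F l i))"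
  then have f: "\<And>i. i \<in> {1..l} \<Longrightarrow> f \<in> ideal.span (lpoly ` tildeQ Q F l i)" by blast
  have "f - linear_subst (kill_summands l) f \<in> ideal.span (?E \<union> ?P)"
    using diff_subst_kill_summands_in_span_products[OF Q f order_refl] ideal.span_mono[of ?P "?E \<union> ?P"]
    by blast
  moreover have "linear_subst (kill_summands l) f \<in> ?E"
  proof
    fix i assume i: "i \<in> {1..l}"
    have "linear_subst (kill_summands l) f \<in> ideal.span (lpoly ` kill_summands l ` tildeQ Q F l i)"
      using f[OF i] by (intro linear_subst_in_span kill_summands_linear order_refl)
    also have "\<dots> \<subseteq> ideal.span (lpoly ` extl ` Q i)"
      using kill_summands_all_tildeQ[of Q i, OF Q[OF i] i] by (intro ideal.span_mono image_mono) blast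
    finally show "linear_subst (kill_summands l) f \<in> ideal.span (lpoly ` extl ` Q i)" .
  qed
  then have "linear_subst (kill_summands l) f \<in> ideal.span (?E \<union> ?P)"
    by (intro ideal.span_base UnI1)
  ultimately show "f \<in> ideal.span (?E \<union> ?P)"
    using ideal.span_add by fastforce
qed (use span_products_subset_Inter_tildeQ in blast)

end

theorem mainTheorem6:
  fixes Q :: "nat \<Rightarrow> ('a::finite \<Rightarrow> 'k::field) set"
    and F :: "nat \<Rightarrow> ('b::finite \<Rightarrow> 'k) set"
    and l :: nat
  assumes "\<forall>i\<in>{1..l}. lsubspace (Q i)"
    and "linearly_joined (\<lambda>i. lin_space (Q i)) l"
    and "direct_sum_decomp F l"
  shows "linearly_joined (\<lambda>i. lin_space (tildeQ Q F l i)) l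
    \<and> (\<forall>i\<in>{2..l}.
         lin_space (tildeQ Q F l i) \<inter> (\<Union>j\<in>{1..<i}. lin_space (tildeQ Q F l j))
       = lin_space (extl ` Q i \<union> range extr)
           \<inter> (\<Union>j\<in>{1..<i}. lin_space (extl ` Q j \<union> range extr)))
    \<and> (\<Inter>i\<in>{1..l}. ideal_gen (lpoly ` tildeQ Q F l i))
       = ideal_gen ((\<Inter>i\<in>{1..l}. ideal_gen (lpoly ` extl ` Q i))
           \<union> (\<Union>i\<in>{1..l}. {f * g | f g. f \<in> lpoly ` tildeQ Q F l i \<and> g \<in> lpoly ` extr ` F i}))"
proof -
  interpret direct_sum F l
    by (rule direct_sum.intro) (fact assms(3))
  have Q: "\<And>i. i \<in> {1..l} \<Longrightarrow> coord.subspace (Q i)"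
    using assms(1) by (simp add: lsubspace_iff_subspace)
  show ?thesis
    unfolding ideal_gen_eq_span
    by (intro conjI ballI linearly_joined_tildeQ[OF assms(2)] lin_space_tildeQ_Int_UN
        Inter_tildeQ_eq_span_products[OF Q])
qed

end
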